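(* Fix $\mathbf d=(d_1,\ldots,d_n)$ of positive integers, $|\mathbf d|=\sum d_i$. In the projective space $\mathbb{P}^{|\mathbf d|}$ with homogeneous coordinates $(\alpha,z)=((\alpha_{i,j})_{1\le i\le n,1\le j\le d_i},z)$, consider the system consisting of $h_1=\cdots=h_{|\mathbf d|-1}=0$ and $z^{|\mathbf d|}=\prod_{i,j}\alpha_{i,j}$, where $h_k$ is the coefficient of $t^k$ in $\tilde f(\mathbf x(t))$ for $\tilde f=\left(\prod_{i=1}^n(x_i+1)\right)-1$ and $x_i(t)=\left(\prod_{j=1}^{d_i}(\alpha_{i,j}t+1)\right)-1$. Then this system has exactly $|\mathbf d|!$ solutions, each of them simple (of multiplicity one).
   Context: This solution set is the fibre over the coefficient vector of $\tilde f$ of the projection from the incidence variety $\{(\alpha,z,\mathbf c): h_k(\mathbf c,\alpha)=0 \ (1\le k\le|\mathbf d|-1),\ z^{|\mathbf d|}=\prod\alpha_{i,j}\}$ to the space of coefficient vectors $\mathbf c$ of $f$. *)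

theory Defs
  imports "HOL-Analysis.Analysis" "HOL-Computational_Algebra.Polynomial"
begin

type_synonym hpoint = "((nat \<times> nat) \<Rightarrow> complex) \<times> complex"
  (* (alpha, z); alpha indexed by (i,j), 0-based: i < n, j < d i *)

definition idx :: "(nat \<Rightarrow> nat) \<Rightarrow> nat \<Rightarrow> (nat \<times> nat) set" where
  "idx d n = {(i,j). i < n \<and> j < d i}"

definition dsum :: "(nat \<Rightarrow> nat) \<Rightarrow> nat \<Rightarrow> nat" where
  "dsum d n = (\<Sum>i<n. d i)"

definition xt :: "(nat \<Rightarrow> nat) \<Rightarrow> ((nat \<times> nat) \<Rightarrow> complex) \<Rightarrow> nat \<Rightarrow> complex poly" where
  "xt d \<alpha> i = (\<Prod>j<d i. [:1, \<alpha> (i,j):]) - 1"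

definition ftilde_xt :: "(nat \<Rightarrow> nat) \<Rightarrow> nat \<Rightarrow> ((nat \<times> nat) \<Rightarrow> complex) \<Rightarrow> complex poly" where
  "ftilde_xt d n \<alpha> = (\<Prod>i<n. xt d \<alpha> i + 1) - 1"

definition hcoef :: "(nat \<Rightarrow> nat) \<Rightarrow> nat \<Rightarrow> nat \<Rightarrow> ((nat \<times> nat) \<Rightarrow> complex) \<Rightarrow> complex" where
  "hcoef d n k \<alpha> = coeff (ftilde_xt d n \<alpha>) k"

definition sys :: "(nat \<Rightarrow> nat) \<Rightarrow> nat \<Rightarrow> nat \<Rightarrow> hpoint \<Rightarrow> complex" where
  "sys d n k p =
     (if k < dsum d n then hcoef d n k (fst p)
      else snd p ^ dsum d n - (\<Prod>v\<in>idx d n. fst p v))"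

definition solutions :: "(nat \<Rightarrow> nat) \<Rightarrow> nat \<Rightarrow> hpoint set" where
  "solutions d n = {p. (\<forall>v. v \<notin> idx d n \<longrightarrow> fst p v = 0) \<and> p \<noteq> (\<lambda>_. 0, 0) \<and>
                       (\<forall>k\<in>{1..dsum d n}. sys d n k p = 0)}"

definition proj_equiv :: "(nat \<Rightarrow> nat) \<Rightarrow> nat \<Rightarrow> (hpoint \<times> hpoint) set" where
  "proj_equiv d n = {(p,q). p \<in> solutions d n \<and> q \<in> solutions d n \<and>
       (\<exists>c::complex. c \<noteq> 0 \<and> q = ((\<lambda>v. c * fst p v), c * snd p))}"

definition pd_alpha :: "(hpoint \<Rightarrow> complex) \<Rightarrow> hpoint \<Rightarrow> nat \<times> nat \<Rightarrow> complex" where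
  "pd_alpha F p v = deriv (\<lambda>s. F ((fst p)(v := s), snd p)) (fst p v)"

definition pd_z :: "(hpoint \<Rightarrow> complex) \<Rightarrow> hpoint \<Rightarrow> complex" where
  "pd_z F p = deriv (\<lambda>s. F (fst p, s)) (snd p)"

text \<open>A solution is simple (multiplicity one) iff the Jacobian matrix of the |d| homogeneous
  equations w.r.t. the |d|+1 homogeneous coordinates has full rank |d| there,
  i.e. its rows are linearly independent.\<close>
definition simple_solution :: "(nat \<Rightarrow> nat) \<Rightarrow> nat \<Rightarrow> hpoint \<Rightarrow> bool" where
  "simple_solution d n p \<longleftrightarrow>
     (\<forall>c :: nat \<Rightarrow> complex.
        ((\<forall>v\<in>idx d n. (\<Sum>k\<in>{1..dsum d n}. c k * pd_alpha (sys d n k) p v) = 0) \<and>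
         (\<Sum>k\<in>{1..dsum d n}. c k * pd_z (sys d n k) p) = 0)
        \<longrightarrow> (\<forall>k\<in>{1..dsum d n}. c k = 0))"

end

theory Submission
  imports Defs
begin

text \<open>
  Since ftilde(x(t)) = prod_{i,j} (1 + alpha_ij t) - 1, the equation h_k = 0 says that the k-th
  elementary symmetric polynomial e_k of the alpha_ij vanishes; write N = |d|. A solution with
  z = 0 would have prod (1 + alpha_ij t) = 1, forcing alpha = 0, so every projective solution has a
  unique representative with z = 1. There the system says prod (1 + alpha_ij t) = 1 + t^N, i.e. the
  alpha_ij enumerate, in some order, the N distinct roots of w^N = -(-1)^N: this gives N! solutions.

  For simplicity, the derivative N z^(N-1) in the z-column of the Jacobian forces the multiplier of
  the last equation to vanish. At a solution the derivative of h_k in alpha_v is e_(k-1) of the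
  other alphas, which equals (-alpha_v)^(k-1); so the remaining multipliers are the coefficients of
  a polynomial of degree < N vanishing at the N distinct points -alpha_v, hence are zero.
\<close>

section \<open>Elementary symmetric polynomials\<close>

text \<open>The coefficient of t^k is the k-th elementary symmetric polynomial of the f v, v in A.\<close>

definition esym_poly :: "('a \<Rightarrow> 'b::comm_ring_1) \<Rightarrow> 'a set \<Rightarrow> 'b poly" where
  "esym_poly f A = (\<Prod>v\<in>A. [:1, f v:])"

lemma esym_poly_remove:
  "finite A \<Longrightarrow> v \<in> A \<Longrightarrow> esym_poly f A = [:1, f v:] * esym_poly f (A - {v})"
  unfolding esym_poly_def by (rule prod.remove)

lemma esym_poly_cong: "(\<And>v. v \<in> A \<Longrightarrow> f v = g v) \<Longrightarrow> esym_poly f A = esym_poly g A"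
  unfolding esym_poly_def by (auto intro: prod.cong)

lemma degree_esym_poly_le: "degree (esym_poly f A) \<le> card A"
proof (cases "finite A")
  case True
  then have "degree (esym_poly f A) \<le> (\<Sum>v\<in>A. degree [:1, f v:])"
    using degree_prod_sum_le[OF True, of "\<lambda>v. [:1, f v:]"] by (simp only: esym_poly_def o_def)
  also have "\<dots> \<le> (\<Sum>v\<in>A. 1)"
    by (rule sum_mono) (simp add: degree_pCons_le)
  finally show ?thesis by simp
qed (simp add: esym_poly_def)

lemma coeff_esym_poly_card: "coeff (esym_poly f A) (card A) = prod f A"
proof (induction A rule: infinite_finite_induct)
  case (insert v A)
  have "coeff (esym_poly f A) (Suc (card A)) = 0"
    by (rule coeff_eq_0) (use degree_esym_poly_le[of f A] in linarith)
  with insert show ?case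
    by (simp add: esym_poly_def)
qed (simp_all add: esym_poly_def)

lemma coeff_0_esym_poly [simp]: "coeff (esym_poly f A) 0 = 1"
  by (simp add: esym_poly_def poly_0_coeff_0 [symmetric] poly_prod)

lemma coeff_esym_poly_scale:
  "coeff (esym_poly (\<lambda>v. c * f v) A) k = c ^ k * coeff (esym_poly f A) k"
proof -
  have "esym_poly (\<lambda>v. c * f v) A = pcompose (esym_poly f A) [:0, c:]"
    unfolding esym_poly_def pcompose_prod
    by (rule prod.cong) (simp_all add: pcompose_pCons)
  then show ?thesis
    by (simp add: coeff_pcompose_linear)
qed

lemma poly_esym_poly_minus_inverse:
  fixes f :: "'a \<Rightarrow> 'b::field"
  assumes "finite A" "w \<noteq> 0"
  shows "poly (esym_poly f A) (- inverse w) = 0 \<longleftrightarrow> w \<in> f ` A"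
  using assms by (auto simp: esym_poly_def poly_prod field_simps)

lemma esym_poly_eq_1_iff:
  fixes f :: "'a \<Rightarrow> 'b::field"
  assumes "finite A"
  shows "esym_poly f A = 1 \<longleftrightarrow> (\<forall>v\<in>A. f v = 0)"
proof
  assume P: "esym_poly f A = 1"
  show "\<forall>v\<in>A. f v = 0"
  proof (rule ballI, rule ccontr)
    fix v assume "v \<in> A" "f v \<noteq> 0"
    then have "poly (esym_poly f A) (- inverse (f v)) = 0"
      using poly_esym_poly_minus_inverse[OF assms] by blast
    with P show False by simp
  qed
qed (simp add: esym_poly_def flip: one_pCons)

lemma coeff_esym_poly_remove:
  fixes f :: "'a \<Rightarrow> 'b::comm_ring_1"
  assumes "finite A" "v \<in> A" "\<forall>k\<in>{1..<m}. coeff (esym_poly f A) k = 0" "j < m"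
  shows "coeff (esym_poly f (A - {v})) j = (- f v) ^ j"
  using \<open>j < m\<close>
proof (induction j)
  case (Suc j)
  have "0 = coeff (esym_poly f A) (Suc j)"
    using assms(3) Suc.prems by simp
  also have "\<dots> = coeff (esym_poly f (A - {v})) (Suc j) + f v * coeff (esym_poly f (A - {v})) j"
    by (simp add: esym_poly_remove[OF assms(1,2)])
  finally show ?case
    using Suc by (simp add: eq_neg_iff_add_eq_0 [symmetric] add.commute)
qed simp

lemma esym_poly_eq_iff_coeff:
  assumes "degree Q \<le> card A" "coeff Q 0 = 1"
  shows "esym_poly f A = Q \<longleftrightarrow> (\<forall>k\<in>{1..card A}. coeff (esym_poly f A) k = coeff Q k)"
proof
  assume coeffs: "\<forall>k\<in>{1..card A}. coeff (esym_poly f A) k = coeff Q k"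
  show "esym_poly f A = Q"
  proof (rule poly_eqI)
    fix k
    consider "k = 0" | "k \<in> {1..card A}" | "card A < k"
      by force
    then show "coeff (esym_poly f A) k = coeff Q k"
    proof cases
      case 3
      then show ?thesis
        using assms(1) degree_esym_poly_le[of f A] by (simp add: coeff_eq_0)
    qed (use assms coeffs in simp_all)
  qed
qed simp

lemma finite_nth_roots_minus_one_power: "finite {w::complex. w ^ N = - ((-1) ^ N)}"
proof (cases "N = 0")
  case False
  then show ?thesis
    by (intro finite_nth_roots) simp
qed simp

lemma card_nth_roots_minus_one_power: "card {w::complex. w ^ N = - ((-1) ^ N)} = N"
proof (cases "N = 0")
  case False
  then show ?thesis
    by (intro card_nth_roots) simp_all
qed simp

lemma poly_1_plus_monom_minus_inverse:
  fixes w :: "'a::field"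
  assumes "w \<noteq> 0"
  shows "poly (1 + monom 1 N) (- inverse w) = 0 \<longleftrightarrow> w ^ N = - ((-1) ^ N)"
proof -
  have "poly (1 + monom 1 N) (- inverse w) = 1 + (-1) ^ N / w ^ N"
    by (simp add: poly_monom power_minus' power_inverse divide_inverse)
  also have "\<dots> = 0 \<longleftrightarrow> w ^ N = - ((-1) ^ N)"
    using assms by (simp add: add_divide_eq_iff add_eq_0_iff2)
  finally show ?thesis .
qed

lemma image_eq_roots_if_esym_poly_eq:
  fixes f :: "'a \<Rightarrow> 'b::field"
  assumes A: "finite A" "card A = N" and N: "N > 0" and P: "esym_poly f A = 1 + monom 1 N"
  shows "f ` A = {w. w ^ N = - ((-1) ^ N)}"
proof -
  have "prod f A = 1"
    using coeff_esym_poly_card[of f A] P A N by simp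
  then have "0 \<notin> f ` A"
    using A(1) by (metis imageE prod_zero_iff zero_neq_one)
  show ?thesis
  proof (rule set_eqI)
    fix w
    show "w \<in> f ` A \<longleftrightarrow> w \<in> {w. w ^ N = - ((-1) ^ N)}"
    proof (cases "w = 0")
      case True
      then show ?thesis
        using \<open>0 \<notin> f ` A\<close> N by (simp add: power_0_left)
    next
      case False
      then show ?thesis
        using poly_esym_poly_minus_inverse[OF A(1) False, of f]
          poly_1_plus_monom_minus_inverse[OF False, of N] P
        by simp
    qed
  qed
qed

lemma esym_poly_eq_if_bij_betw_roots:
  fixes f :: "'a \<Rightarrow> 'b::field"
  assumes A: "finite A" "card A = N" and N: "N > 0"
    and bij: "bij_betw f A {w. w ^ N = - ((-1) ^ N)}" (is "bij_betw f A ?W")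
  shows "esym_poly f A = 1 + monom 1 N"
proof -
  have W_nonzero: "0 \<notin> ?W"
    using N by (simp add: power_0_left)
  define B where "B = insert 0 ((\<lambda>w. - inverse w) ` ?W)"
  have "finite ?W" "card ?W = N"
    using bij_betw_finite[OF bij] bij_betw_same_card[OF bij] A by simp_all
  moreover have "inj_on (\<lambda>w. - inverse w) ?W"
    by (auto simp: inj_on_def)
  moreover have "0 \<notin> (\<lambda>w. - inverse w) ` ?W"
    using W_nonzero by auto
  ultimately have card_B: "card B = N + 1"
    unfolding B_def by (simp add: card_image)
  show ?thesis
  proof (rule poly_eqI_degree[of B])
    fix x assume "x \<in> B"
    then consider "x = 0" | w where "w \<in> ?W" "w \<noteq> 0" "x = - inverse w"
      unfolding B_def using W_nonzero by blast
    then show "poly (esym_poly f A) x = poly (1 + monom 1 N) x"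
    proof cases
      case 1
      then show ?thesis
        using N by (simp add: poly_0_coeff_0)
    next
      case 2
      then show ?thesis
        using poly_esym_poly_minus_inverse[OF A(1) \<open>w \<noteq> 0\<close>, of f]
          poly_1_plus_monom_minus_inverse[OF \<open>w \<noteq> 0\<close>, of N] bij_betw_imp_surj_on[OF bij]
        by simp
    qed
  next
    show "degree (esym_poly f A) < card B"
      using degree_esym_poly_le[of f A] A card_B by simp
    have "degree (1 + monom 1 N :: 'b poly) \<le> N"
      by (intro degree_add_le) (simp_all add: degree_monom_le)
    then show "degree (1 + monom 1 N :: 'b poly) < card B"
      using card_B by simp
  qed
qed

lemma coeff_esym_poly_iff_bij_betw_roots:
  fixes f :: "'a \<Rightarrow> complex"
  assumes A: "finite A" "card A = N"
  shows "(\<forall>k\<in>{1..N}. coeff (esym_poly f A) k = (if k = N then 1 else 0))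
           \<longleftrightarrow> bij_betw f A {w. w ^ N = - ((-1) ^ N)}"
proof (cases "N = 0")
  case True
  then show ?thesis
    using A by (simp add: bij_betw_def)
next
  case False
  have "degree (1 + monom 1 N :: complex poly) \<le> card A"
    using A by (intro degree_add_le) (simp_all add: degree_monom_le)
  then have "(\<forall>k\<in>{1..N}. coeff (esym_poly f A) k = (if k = N then 1 else 0))
               \<longleftrightarrow> esym_poly f A = 1 + monom 1 N"
    using A False by (subst esym_poly_eq_iff_coeff) auto
  also have "\<dots> \<longleftrightarrow> bij_betw f A {w. w ^ N = - ((-1) ^ N)}"
  proof
    assume "esym_poly f A = 1 + monom 1 N"
    with A False have "f ` A = {w. w ^ N = - ((-1) ^ N)}"
      by (intro image_eq_roots_if_esym_poly_eq) simp_all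
    then show "bij_betw f A {w. w ^ N = - ((-1) ^ N)}"
      using A card_nth_roots_minus_one_power[of N] by (simp add: bij_betw_def eq_card_imp_inj_on)
  qed (use A False esym_poly_eq_if_bij_betw_roots in simp)
  finally show ?thesis .
qed

section \<open>Counting the projective solutions\<close>

lemma card_bij_betw_zero_outside:
  fixes W :: "'b::zero set"
  assumes A: "finite A" and W: "finite W" "card A = card W"
  shows "card {f. (\<forall>v. v \<notin> A \<longrightarrow> f v = 0) \<and> bij_betw f A W} = fact (card A)"
proof -
  obtain h where h: "bij_betw h A W"
    using finite_same_card_bij A W by metis
  define extend where "extend p = (\<lambda>v. if v \<in> A then h (p v) else 0)" for p :: "'a \<Rightarrow> 'a"
  have "{f. (\<forall>v. v \<notin> A \<longrightarrow> f v = 0) \<and> bij_betw f A W} = extend ` {p. p permutes A}"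
  proof (intro equalityI subsetI)
    fix f assume f: "f \<in> {f. (\<forall>v. v \<notin> A \<longrightarrow> f v = 0) \<and> bij_betw f A W}"
    define p where "p v = (if v \<in> A then inv_into A h (f v) else v)" for v
    have "bij_betw (inv_into A h \<circ> f) A A"
      using f bij_betw_inv_into[OF h] bij_betw_trans by blast
    then have "bij_betw p A A"
      by (rule bij_betw_cong[THEN iffD1, rotated]) (simp add: p_def)
    then have "p permutes A"
      by (rule bij_imp_permutes) (simp add: p_def)
    moreover have "extend p = f"
      using f h by (auto simp: extend_def p_def fun_eq_iff bij_betw_inv_into_right bij_betwE)
    ultimately show "f \<in> extend ` {p. p permutes A}"
      by blast
  next
    fix f assume "f \<in> extend ` {p. p permutes A}"
    then obtain p where p: "p permutes A" and f: "f = extend p"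
      by blast
    have "bij_betw (h \<circ> p) A W"
      using permutes_imp_bij[OF p] h bij_betw_trans by blast
    then have "bij_betw f A W"
      by (rule bij_betw_cong[THEN iffD1, rotated]) (simp add: f extend_def)
    then show "f \<in> {f. (\<forall>v. v \<notin> A \<longrightarrow> f v = 0) \<and> bij_betw f A W}"
      by (simp add: f extend_def)
  qed
  moreover have "inj_on extend {p. p permutes A}"
  proof (rule inj_onI, rule ext)
    fix p q v assume p: "p \<in> {p. p permutes A}" and q: "q \<in> {p. p permutes A}"
      and eq: "extend p = extend q"
    show "p v = q v"
    proof (cases "v \<in> A")
      case True
      then have "h (p v) = h (q v)"
        using fun_cong[OF eq, of v] by (simp add: extend_def)
      then show ?thesis
        using True p q h by (auto simp: bij_betw_def inj_on_def permutes_in_image)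
    qed (use p q in \<open>simp add: permutes_not_in\<close>)
  qed
  ultimately show ?thesis
    using card_permutations[OF refl A] by (simp add: card_image)
qed

lemma card_quotient_proportional:
  fixes X :: "(('a \<Rightarrow> 'b::field) \<times> 'b) set"
  assumes X_snd: "\<forall>p\<in>X. snd p \<noteq> 0"
    and X_scale: "\<forall>p\<in>X. \<forall>c. c \<noteq> 0 \<longrightarrow> ((\<lambda>v. c * fst p v), c * snd p) \<in> X"
  shows "card (X // {(p, q). p \<in> X \<and> q \<in> X \<and> (\<exists>c. c \<noteq> 0 \<and> q = ((\<lambda>v. c * fst p v), c * snd p))})
           = card {\<beta>. (\<beta>, 1) \<in> X}"
    (is "card (X // ?R) = card ?B")
proof -
  have "equiv X ?R"
  proof (rule equivI)
    show "refl_on X ?R"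
      by (rule refl_onI) (auto intro: exI[of _ 1])
    have "(q, p) \<in> ?R" if "(p, q) \<in> ?R" for p q
    proof -
      from that obtain c where pq: "p \<in> X" "q \<in> X" "c \<noteq> 0"
        and q: "q = ((\<lambda>v. c * fst p v), c * snd p)"
        by blast
      then have "p = ((\<lambda>v. inverse c * fst q v), inverse c * snd q)"
        by (simp add: prod_eq_iff fun_eq_iff)
      with pq show ?thesis
        by (auto intro!: exI[of _ "inverse c"])
    qed
    then show "sym ?R"
      by (rule symI)
    have "(p, r) \<in> ?R" if "(p, q) \<in> ?R" "(q, r) \<in> ?R" for p q r
    proof -
      from that obtain c c' where "p \<in> X" "r \<in> X" "c \<noteq> 0" "c' \<noteq> 0"
        and "q = ((\<lambda>v. c * fst p v), c * snd p)" "r = ((\<lambda>v. c' * fst q v), c' * snd q)"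
        by blast
      then show ?thesis
        by (auto intro!: exI[of _ "c' * c"] simp: mult.assoc)
    qed
    then show "trans ?R"
      by (rule transI)
  qed auto
  have rescale: "(p, ((\<lambda>v. fst p v / snd p), 1)) \<in> ?R" if "p \<in> X" for p
    using that X_snd X_scale[rule_format, of p "inverse (snd p)"]
    by (auto intro!: exI[of _ "inverse (snd p)"] simp: field_simps)
  have "bij_betw (\<lambda>\<beta>. ?R `` {(\<beta>, 1)}) ?B (X // ?R)"
  proof (rule bij_betw_imageI)
    show "inj_on (\<lambda>\<beta>. ?R `` {(\<beta>, 1)}) ?B"
    proof (rule inj_onI)
      fix \<beta> \<gamma> assume "\<beta> \<in> ?B" "\<gamma> \<in> ?B" "?R `` {(\<beta>, 1)} = ?R `` {(\<gamma>, 1)}"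
      then have "((\<beta>, 1), (\<gamma>, 1)) \<in> ?R"
        using eq_equiv_class_iff[OF \<open>equiv X ?R\<close>, of "(\<beta>, 1)" "(\<gamma>, 1)"] by simp
      then show "\<beta> = \<gamma>"
        by auto
    qed
    show "(\<lambda>\<beta>. ?R `` {(\<beta>, 1)}) ` ?B = X // ?R"
    proof (intro equalityI subsetI)
      fix Y assume "Y \<in> X // ?R"
      then obtain p where p: "p \<in> X" and Y: "Y = ?R `` {p}"
        by (rule quotientE)
      have "(\<lambda>v. fst p v / snd p) \<in> ?B"
        using rescale[OF p] by simp
      moreover have "Y = ?R `` {((\<lambda>v. fst p v / snd p), 1)}"
        using Y equiv_class_eq[OF \<open>equiv X ?R\<close> rescale[OF p]] by simp
      ultimately show "Y \<in> (\<lambda>\<beta>. ?R `` {(\<beta>, 1)}) ` ?B"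
        by blast
    next
      fix Y assume "Y \<in> (\<lambda>\<beta>. ?R `` {(\<beta>, 1)}) ` ?B"
      then obtain \<beta> where "(\<beta>, 1) \<in> X" and Y: "Y = ?R `` {(\<beta>, 1)}"
        by blast
      then have "?R `` {(\<beta>, 1)} \<in> X // ?R"
        by (intro quotientI)
      with Y show "Y \<in> X // ?R"
        by (simp only:)
    qed
  qed
  then show ?thesis
    by (rule bij_betw_same_card [symmetric])
qed

lemma idx_eq_Sigma: "idx d n = Sigma {..<n} (\<lambda>i. {..<d i})"
  unfolding idx_def by auto

lemma finite_idx [simp]: "finite (idx d n)"
  unfolding idx_eq_Sigma by simp

lemma card_idx [simp]: "card (idx d n) = dsum d n"
  unfolding idx_eq_Sigma dsum_def by simp

lemma ftilde_xt_eq_esym_poly: "ftilde_xt d n \<alpha> = esym_poly \<alpha> (idx d n) - 1"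
  unfolding ftilde_xt_def xt_def esym_poly_def idx_eq_Sigma by (simp add: prod.Sigma)

lemma sys_eq_coeff_esym_poly:
  assumes "1 \<le> k" "k \<le> dsum d n"
  shows "sys d n k (\<alpha>, z) =
           (if k < dsum d n then coeff (esym_poly \<alpha> (idx d n)) k
            else z ^ dsum d n - coeff (esym_poly \<alpha> (idx d n)) k)"
  using assms coeff_esym_poly_card[of \<alpha> "idx d n"]
  by (simp add: sys_def hcoef_def ftilde_xt_eq_esym_poly)

lemma sys_scale:
  assumes "1 \<le> k" "k \<le> dsum d n"
  shows "sys d n k ((\<lambda>v. c * \<alpha> v), c * z) = c ^ k * sys d n k (\<alpha>, z)"
  using assms by (simp add: sys_eq_coeff_esym_poly coeff_esym_poly_scale algebra_simps)

lemma scale_in_solutions: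
  assumes "p \<in> solutions d n" "c \<noteq> 0"
  shows "((\<lambda>v. c * fst p v), c * snd p) \<in> solutions d n"
proof -
  have "((\<lambda>v. c * fst p v), c * snd p) \<noteq> (\<lambda>_. 0, 0)"
    using assms by (auto simp: solutions_def fun_eq_iff prod_eq_iff)
  then show ?thesis
    using assms sys_scale[of _ d n c "fst p" "snd p"] by (auto simp: solutions_def)
qed

lemma snd_solution_nonzero:
  assumes "p \<in> solutions d n"
  shows "snd p \<noteq> 0"
proof
  obtain \<alpha> z where p: "p = (\<alpha>, z)"
    by fastforce
  assume "snd p = 0"
  with p have z: "z = 0"
    by simp
  have "coeff (esym_poly \<alpha> (idx d n)) k = coeff 1 k" if k: "k \<in> {1..dsum d n}" for k
  proof -
    have "sys d n k (\<alpha>, z) = 0"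
      using assms k by (simp add: solutions_def p)
    then show ?thesis
      using k z by (auto simp: sys_eq_coeff_esym_poly power_0_left split: if_splits)
  qed
  then have "esym_poly \<alpha> (idx d n) = 1"
    by (subst esym_poly_eq_iff_coeff) simp_all
  then have "\<forall>v\<in>idx d n. \<alpha> v = 0"
    by (simp add: esym_poly_eq_1_iff)
  with assms have "\<alpha> = (\<lambda>_. 0)"
    by (auto simp: solutions_def p fun_eq_iff)
  with z assms show False
    by (simp add: solutions_def p)
qed

lemma affine_in_solutions_iff:
  "(\<beta>, 1) \<in> solutions d n \<longleftrightarrow>
     (\<forall>v. v \<notin> idx d n \<longrightarrow> \<beta> v = 0) \<and>
     bij_betw \<beta> (idx d n) {w. w ^ dsum d n = - ((-1) ^ dsum d n)}"
proof -
  have "(\<beta>, 1) \<in> solutions d n \<longleftrightarrow>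
          (\<forall>v. v \<notin> idx d n \<longrightarrow> \<beta> v = 0) \<and> (\<forall>k\<in>{1..dsum d n}. sys d n k (\<beta>, 1) = 0)"
    by (simp add: solutions_def)
  also have "(\<forall>k\<in>{1..dsum d n}. sys d n k (\<beta>, 1) = 0) \<longleftrightarrow>
          (\<forall>k\<in>{1..dsum d n}. coeff (esym_poly \<beta> (idx d n)) k = (if k = dsum d n then 1 else 0))"
    by (auto simp: sys_eq_coeff_esym_poly)
  also have "\<dots> \<longleftrightarrow> bij_betw \<beta> (idx d n) {w. w ^ dsum d n = - ((-1) ^ dsum d n)}"
    by (rule coeff_esym_poly_iff_bij_betw_roots) simp_all
  finally show ?thesis .
qed

lemma card_solutions_quotient: "card (solutions d n // proj_equiv d n) = fact (dsum d n)"
proof -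
  have "card (solutions d n // proj_equiv d n) = card {\<beta>. (\<beta>, 1) \<in> solutions d n}"
    unfolding proj_equiv_def
    by (rule card_quotient_proportional) (simp_all add: snd_solution_nonzero scale_in_solutions)
  also have "\<dots> = fact (card (idx d n))"
    unfolding affine_in_solutions_iff
    by (rule card_bij_betw_zero_outside)
       (simp_all add: finite_nth_roots_minus_one_power card_nth_roots_minus_one_power)
  finally show ?thesis
    by simp
qed

section \<open>Simplicity of the solutions\<close>

lemma pd_z_sys:
  assumes "k \<le> dsum d n"
  shows "pd_z (sys d n k) (\<alpha>, z) = (if k = dsum d n then of_nat k * z ^ (k - 1) else 0)"
proof (cases "k = dsum d n")
  case True
  have "((\<lambda>s. s ^ k - prod \<alpha> (idx d n)) has_field_derivative of_nat k * z ^ (k - 1)) (at z)"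
    by (auto intro!: derivative_eq_intros)
  with True show ?thesis
    by (simp add: pd_z_def sys_def DERIV_imp_deriv)
next
  case False
  with assms show ?thesis
    by (simp add: pd_z_def sys_def)
qed

lemma pd_alpha_sys:
  assumes v: "v \<in> idx d n" and k: "1 \<le> k" "k < dsum d n"
  shows "pd_alpha (sys d n k) (\<alpha>, z) v = coeff (esym_poly \<alpha> (idx d n - {v})) (k - 1)"
proof -
  let ?R = "esym_poly \<alpha> (idx d n - {v})"
  have "sys d n k (\<alpha>(v := s), z) = coeff ?R k + s * coeff ?R (k - 1)" for s
  proof -
    have "esym_poly (\<alpha>(v := s)) (idx d n - {v}) = ?R"
      by (rule esym_poly_cong) simp
    then have "esym_poly (\<alpha>(v := s)) (idx d n) = [:1, s:] * ?R"
      using esym_poly_remove[OF finite_idx v, of "\<alpha>(v := s)"] by simp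
    then have "sys d n k (\<alpha>(v := s), z) = coeff ([:1, s:] * ?R) k"
      using k by (simp add: sys_eq_coeff_esym_poly)
    also have "\<dots> = coeff ?R k + s * coeff ?R (k - 1)"
      using k by (cases k) simp_all
    finally show ?thesis .
  qed
  moreover have "((\<lambda>s. coeff ?R k + s * coeff ?R (k - 1)) has_field_derivative coeff ?R (k - 1)) (at s)"
    for s
    by (auto intro!: derivative_eq_intros)
  ultimately show ?thesis
    by (simp add: pd_alpha_def DERIV_imp_deriv)
qed

lemma coeffs_eq_0_if_roots:
  fixes a :: "nat \<Rightarrow> 'a::idom"
  assumes "finite X" "card X = m" "\<forall>x\<in>X. (\<Sum>j<m. a j * x ^ j) = 0" "j < m"
  shows "a j = 0"
proof -
  define p where "p = (\<Sum>j<m. monom (a j) j)"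
  have "degree p < m"
    unfolding p_def using \<open>j < m\<close>
    by (intro degree_sum_less) (auto intro: le_less_trans[OF degree_monom_le])
  moreover have "poly p x = poly 0 x" if "x \<in> X" for x
    using assms(3) that by (simp add: p_def poly_sum poly_monom)
  ultimately have "p = 0"
    using assms(2) by (intro poly_eqI_degree[of X]) auto
  then have "coeff p j = 0"
    by simp
  then show ?thesis
    using \<open>j < m\<close> by (simp add: p_def coeff_sum)
qed

lemma coeff_esym_poly_eq_0_if_solution:
  assumes "(\<alpha>, z) \<in> solutions d n" "k \<in> {1..<dsum d n}"
  shows "coeff (esym_poly \<alpha> (idx d n)) k = 0"
proof -
  have "sys d n k (\<alpha>, z) = 0"
    using assms by (simp add: solutions_def)
  with assms(2) show ?thesis
    by (simp add: sys_eq_coeff_esym_poly)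
qed

lemma inj_on_solution:
  assumes sol: "(\<alpha>, z) \<in> solutions d n"
  shows "inj_on \<alpha> (idx d n)"
proof -
  have z: "z \<noteq> 0"
    using snd_solution_nonzero[OF sol] by simp
  then have "((\<lambda>v. inverse z * \<alpha> v), 1) \<in> solutions d n"
    using scale_in_solutions[OF sol, of "inverse z"] by simp
  then have "inj_on (\<lambda>v. inverse z * \<alpha> v) (idx d n)"
    by (simp add: affine_in_solutions_iff bij_betw_def)
  with z show ?thesis
    by (auto simp: inj_on_def)
qed

lemma pd_alpha_sys_at_solution:
  assumes sol: "(\<alpha>, z) \<in> solutions d n" and v: "v \<in> idx d n" and k: "k \<in> {1..<dsum d n}"
  shows "pd_alpha (sys d n k) (\<alpha>, z) v = (- \<alpha> v) ^ (k - 1)"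
proof -
  have "\<forall>j\<in>{1..<dsum d n}. coeff (esym_poly \<alpha> (idx d n)) j = 0"
    using coeff_esym_poly_eq_0_if_solution[OF sol] by blast
  then have "coeff (esym_poly \<alpha> (idx d n - {v})) (k - 1) = (- \<alpha> v) ^ (k - 1)"
    by (rule coeff_esym_poly_remove[OF finite_idx v]) (use k in auto)
  with k show ?thesis
    using pd_alpha_sys[OF v] by simp
qed

lemma simple_solution_if_in_solutions:
  assumes sol: "p \<in> solutions d n"
  shows "simple_solution d n p"
  unfolding simple_solution_def
proof (intro allI impI)
  fix c :: "nat \<Rightarrow> complex"
  obtain \<alpha> z where p: "p = (\<alpha>, z)"
    by fastforce
  let ?N = "dsum d n" and ?I = "idx d n"
  assume "(\<forall>v\<in>?I. (\<Sum>k\<in>{1..?N}. c k * pd_alpha (sys d n k) p v) = 0) \<and>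
          (\<Sum>k\<in>{1..?N}. c k * pd_z (sys d n k) p) = 0"
  then have rows: "\<forall>v\<in>?I. (\<Sum>k\<in>{1..?N}. c k * pd_alpha (sys d n k) (\<alpha>, z) v) = 0"
    and column_z: "(\<Sum>k\<in>{1..?N}. c k * pd_z (sys d n k) (\<alpha>, z)) = 0"
    by (simp_all add: p)
  show "\<forall>k\<in>{1..?N}. c k = 0"
  proof (cases "?N = 0")
    case False
    have "(\<Sum>k\<in>{1..?N}. c k * pd_z (sys d n k) (\<alpha>, z))
            = (\<Sum>k\<in>{1..?N}. if k = ?N then c ?N * (of_nat ?N * z ^ (?N - 1)) else 0)"
      by (rule sum.cong) (auto simp: pd_z_sys)
    with column_z False snd_solution_nonzero[OF sol] have c_N: "c ?N = 0"
      by (simp add: p)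
    have "(\<Sum>j<?N. c (Suc j) * x ^ j) = 0" if "x \<in> (\<lambda>v. - \<alpha> v) ` ?I" for x
    proof -
      from that obtain v where v: "v \<in> ?I" and x: "x = - \<alpha> v"
        by blast
      have "(\<Sum>j<?N. c (Suc j) * x ^ j) = (\<Sum>j<?N. c (Suc j) * pd_alpha (sys d n (Suc j)) (\<alpha>, z) v)"
      proof (rule sum.cong)
        fix j assume "j \<in> {..<?N}"
        then consider "Suc j = ?N" | "Suc j \<in> {1..<?N}"
          by fastforce
        then show "c (Suc j) * x ^ j = c (Suc j) * pd_alpha (sys d n (Suc j)) (\<alpha>, z) v"
          by cases (simp_all add: c_N x pd_alpha_sys_at_solution[OF sol[unfolded p] v])
      qed simp
      also have "\<dots> = 0"
        using rows v by (simp add: sum.atLeast1_atMost_eq)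
      finally show ?thesis .
    qed
    moreover have "card ((\<lambda>v. - \<alpha> v) ` ?I) = ?N"
      using inj_on_solution[OF sol[unfolded p]] by (simp add: card_image inj_on_def)
    ultimately have c_Suc: "c (Suc j) = 0" if "j < ?N" for j
      using coeffs_eq_0_if_roots[of "(\<lambda>v. - \<alpha> v) ` ?I" ?N "\<lambda>j. c (Suc j)" j] that by simp
    show ?thesis
    proof
      fix k assume "k \<in> {1..?N}"
      then have "k = Suc (k - 1)" "k - 1 < ?N"
        by auto
      then show "c k = 0"
        using c_Suc by metis
    qed
  qed simp
qed

theorem lemma3p5:
  fixes d :: "nat \<Rightarrow> nat" and n :: nat
  assumes "\<forall>i<n. 0 < d i"
  shows "card (solutions d n // proj_equiv d n) = fact (dsum d n)
         \<and> (\<forall>p\<in>solutions d n. simple_solution d n p)"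
  using card_solutions_quotient simple_solution_if_in_solutions by blast

end
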